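(* For every integer $m \ge 3$, the graph $P_m \boxtimes K_2$ is a planar graph that is closed locally Dirac; in particular there are infinitely many planar closed locally Dirac graphs.
   Context: $P_m$ is the path on $m$ vertices and $K_2$ the complete graph on 2 vertices. The strong product $G \boxtimes H$ has vertex set $V(G)\times V(H)$, with $(u,v)$ adjacent to $(x,y)$ iff either $u=x$ and $vy \in E(H)$, or $v=y$ and $ux \in E(G)$, or $ux \in E(G)$ and $vy \in E(H)$. A graph $G$ is closed locally Dirac if for every vertex $v$, the subgraph $\langle N[v]\rangle$ induced by the closed neighbourhood $N[v]=N(v)\cup\{v\}$ satisfies Dirac's condition, i.e. every vertex of $\langle N[v]\rangle$ has degree in $\langle N[v]\rangle$ at least $|N[v]|/2$. *)

theory Defs
  imports "HOL-Analysis.Analysis"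
begin

text \<open>A simple graph is given by a vertex set V and an adjacency predicate adj,
  assumed symmetric and irreflexive (the concrete graphs below satisfy this).\<close>

definition strong_product ::
  "('a \<Rightarrow> 'a \<Rightarrow> bool) \<Rightarrow> ('b \<Rightarrow> 'b \<Rightarrow> bool) \<Rightarrow> ('a \<times> 'b) \<Rightarrow> ('a \<times> 'b) \<Rightarrow> bool" where
  "strong_product adjG adjH = (\<lambda>(u, v) (x, y).
      (u = x \<and> adjH v y) \<or> (v = y \<and> adjG u x) \<or> (adjG u x \<and> adjH v y))"

definition path_V :: "nat \<Rightarrow> nat set" where "path_V m = {0..<m}"
definition path_adj :: "nat \<Rightarrow> nat \<Rightarrow> bool" where "path_adj i j = (i = j + 1 \<or> j = i + 1)"
definition K2_V :: "nat set" where "K2_V = {0, 1}"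
definition K2_adj :: "nat \<Rightarrow> nat \<Rightarrow> bool" where "K2_adj i j = (i \<noteq> j)"

definition closed_nbhd :: "'a set \<Rightarrow> ('a \<Rightarrow> 'a \<Rightarrow> bool) \<Rightarrow> 'a \<Rightarrow> 'a set" where
  "closed_nbhd V adj v = {u \<in> V. adj v u} \<union> {v}"

definition dirac_induced :: "'a set \<Rightarrow> ('a \<Rightarrow> 'a \<Rightarrow> bool) \<Rightarrow> bool" where
  "dirac_induced S adj = (\<forall>x\<in>S. real (card {y \<in> S. adj x y}) \<ge> real (card S) / 2)"

definition closed_locally_dirac :: "'a set \<Rightarrow> ('a \<Rightarrow> 'a \<Rightarrow> bool) \<Rightarrow> bool" where
  "closed_locally_dirac V adj = (\<forall>v\<in>V. dirac_induced (closed_nbhd V adj v) adj)"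

definition graph_edges :: "'a set \<Rightarrow> ('a \<Rightarrow> 'a \<Rightarrow> bool) \<Rightarrow> 'a set set" where
  "graph_edges V adj = {{u, v} | u v. u \<in> V \<and> v \<in> V \<and> adj u v}"

definition planar :: "'a set \<Rightarrow> ('a \<Rightarrow> 'a \<Rightarrow> bool) \<Rightarrow> bool" where
  "planar V adj = (\<exists>(f :: 'a \<Rightarrow> real \<times> real) (\<gamma> :: 'a set \<Rightarrow> real \<Rightarrow> real \<times> real).
      inj_on f V \<and>
      (\<forall>e \<in> graph_edges V adj. (\<exists>u v. e = {u, v} \<and> arc (\<gamma> e) \<and>
            pathstart (\<gamma> e) = f u \<and> pathfinish (\<gamma> e) = f v) \<and>
          path_image (\<gamma> e) \<inter> f ` V \<subseteq> f ` e) \<and>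
      (\<forall>e \<in> graph_edges V adj. \<forall>e' \<in> graph_edges V adj. e \<noteq> e' \<longrightarrow>
          path_image (\<gamma> e) \<inter> path_image (\<gamma> e') \<subseteq> f ` (e \<inter> e')))"

end

theory Submission
  imports Defs
begin

text \<open>Draw layer k of the ladder P_m \<boxtimes> K_2, i.e.\ the vertices (k, 0) and (k, 1), at the
  images of two base points under the k-th power of a quarter turn followed by scaling by 1/4, and
  draw edges as straight segments. Every edge is the image of one of five edges between layers 0
  and 1 under a power of this map, so two edges can be compared after undoing their common power:
  edges starting in the same or in adjacent layers are checked by computing orientations, and edges
  starting two or more layers further in lie in a small triangle that the five base edges avoid.
  The closed neighbourhood of a vertex consists of at most three complete consecutive layers, and
  within it Dirac's condition is a count.\<close>

section \<open>Straight-line drawings\<close>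

definition det2 :: "real \<times> real \<Rightarrow> real \<times> real \<Rightarrow> real" where
  "det2 a b = fst a * snd b - snd a * fst b"

definition left_of :: "real \<times> real \<Rightarrow> real \<times> real \<Rightarrow> real \<times> real \<Rightarrow> bool" where
  "left_of p q x \<longleftrightarrow> 0 < det2 (q - p) (x - p)"

lemma det2_scaleR_right: "det2 a (t *\<^sub>R b) = t * det2 a b"
  by (simp add: det2_def algebra_simps)

lemma det2_on_closed_segment:
  assumes "x \<in> closed_segment p r"
  shows "\<exists>t. x = p + t *\<^sub>R (r - p) \<and> det2 (q - p) (x - p) = t * det2 (q - p) (r - p)"
proof -
  obtain t where "x = (1 - t) *\<^sub>R p + t *\<^sub>R r"
    using assms by (auto simp: in_segment)
  then have "x - p = t *\<^sub>R (r - p)" by (simp add: algebra_simps)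
  then show ?thesis by (metis det2_scaleR_right diff_add_cancel add.commute)
qed

lemma closed_segment_disjoint_hull:
  assumes "\<forall>x\<in>S. left_of p q x"
  shows "closed_segment p q \<inter> convex hull S = {}"
proof -
  define n where "n = (- snd (q - p), fst (q - p))"
  have det2_inner: "det2 (q - p) (x - p) = inner n x - inner n p" for x
    by (simp add: n_def det2_def inner_prod_def algebra_simps)
  have "convex hull S \<subseteq> {x. inner n x > inner n p}"
    using assms by (intro hull_minimal convex_halfspace_gt) (auto simp: left_of_def det2_inner)
  moreover have "det2 (q - p) (x - p) = 0" if "x \<in> closed_segment p q" for x
    using det2_on_closed_segment[OF that, of q] by (auto simp: det2_def)
  ultimately show ?thesis by (force simp: det2_inner)
qed

lemma closed_segment_Int_hinge:
  assumes "det2 (q - p) (r - p) \<noteq> 0"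
  shows "closed_segment p q \<inter> closed_segment p r \<subseteq> {p}"
proof
  fix x assume x: "x \<in> closed_segment p q \<inter> closed_segment p r"
  obtain t where t: "x = p + t *\<^sub>R (r - p)" "det2 (q - p) (x - p) = t * det2 (q - p) (r - p)"
    using x det2_on_closed_segment by blast
  have "det2 (q - p) (x - p) = 0"
    using x det2_on_closed_segment[of x p q q] by (auto simp: det2_def)
  then have "t = 0" using t(2) assms by simp
  then show "x \<in> {p}" using t(1) by simp
qed

definition proper_segments :: "real \<times> real \<Rightarrow> real \<times> real \<Rightarrow> real \<times> real \<Rightarrow> real \<times> real \<Rightarrow> bool" where
  "proper_segments p q r s \<longleftrightarrow> closed_segment p q \<inter> closed_segment r s \<subseteq> {p, q} \<inter> {r, s}"

lemma proper_segments_commute: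
  "proper_segments p q r s \<longleftrightarrow> proper_segments q p r s"
  "proper_segments p q r s \<longleftrightarrow> proper_segments p q s r"
  "proper_segments p q r s \<longleftrightarrow> proper_segments r s p q"
  unfolding proper_segments_def by (simp_all add: closed_segment_commute insert_commute Int_commute)

lemma proper_segments_doubleton_cong:
  "{p, q} = {p', q'} \<Longrightarrow> {r, s} = {r', s'} \<Longrightarrow> proper_segments p q r s = proper_segments p' q' r' s'"
  by (auto simp: doubleton_eq_iff proper_segments_commute)

lemma proper_segments_linear_image:
  assumes "linear f" "inj f" "proper_segments p q r s"
  shows "proper_segments (f p) (f q) (f r) (f s)"
proof -
  have "closed_segment (f p) (f q) \<inter> closed_segment (f r) (f s) = f ` (closed_segment p q \<inter> closed_segment r s)"
    using assms(1,2) by (simp add: closed_segment_linear_image image_Int)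
  also have "\<dots> \<subseteq> f ` ({p, q} \<inter> {r, s})"
    using assms(3) unfolding proper_segments_def by (rule image_mono)
  finally show ?thesis
    using assms(2) by (simp add: proper_segments_def image_Int)
qed

text \<open>A sufficient condition for \<open>proper_segments\<close> that simp decides on concrete coordinates:
  the segments share an endpoint without being collinear, or one lies strictly on one side of the
  line through the other.\<close>
definition hinged_or_separated :: "real \<times> real \<Rightarrow> real \<times> real \<Rightarrow> real \<times> real \<Rightarrow> real \<times> real \<Rightarrow> bool" where
  "hinged_or_separated p q r s \<longleftrightarrow>
     (p = r \<and> det2 (q - p) (s - p) \<noteq> 0) \<or> (p = s \<and> det2 (q - p) (r - p) \<noteq> 0) \<or>
     (q = r \<and> det2 (p - q) (s - q) \<noteq> 0) \<or> (q = s \<and> det2 (p - q) (r - q) \<noteq> 0) \<or>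
     (\<forall>x\<in>{r, s}. left_of p q x) \<or> (\<forall>x\<in>{r, s}. left_of q p x) \<or>
     (\<forall>x\<in>{p, q}. left_of r s x) \<or> (\<forall>x\<in>{p, q}. left_of s r x)"

lemma proper_segments_if_hinged:
  assumes "det2 (q - p) (r - p) \<noteq> 0"
  shows "proper_segments p q p r"
  using closed_segment_Int_hinge[OF assms] by (auto simp: proper_segments_def)

lemma proper_segments_if_separated:
  assumes "\<forall>x\<in>{r, s}. left_of p q x"
  shows "proper_segments p q r s"
  using closed_segment_disjoint_hull[OF assms] by (simp add: proper_segments_def segment_convex_hull)

lemma proper_segments_if_hinged_or_separated:
  assumes "hinged_or_separated p q r s"
  shows "proper_segments p q r s"
  using assms unfolding hinged_or_separated_def
  by (metis proper_segments_commute proper_segments_if_hinged proper_segments_if_separated)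

lemma planar_straight_line:
  fixes f :: "'a \<Rightarrow> real \<times> real"
  assumes inj: "inj_on f V"
    and irrefl: "\<And>v. v \<in> V \<Longrightarrow> \<not> adj v v"
    and no_isolated: "\<And>v. v \<in> V \<Longrightarrow> \<exists>w\<in>V. adj v w"
    and proper: "\<And>u v u' v'. \<lbrakk>u \<in> V; v \<in> V; u' \<in> V; v' \<in> V; adj u v; adj u' v'; {u, v} \<noteq> {u', v'}\<rbrakk>
                  \<Longrightarrow> proper_segments (f u) (f v) (f u') (f v')"
  shows "planar V adj"
proof -
  define ends where "ends e = (SOME p. fst p \<in> V \<and> snd p \<in> V \<and> adj (fst p) (snd p) \<and> e = {fst p, snd p})" for e
  define \<gamma> where "\<gamma> e = linepath (f (fst (ends e))) (f (snd (ends e)))" for e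
  have edge_ends: "fst (ends e) \<in> V \<and> snd (ends e) \<in> V \<and> adj (fst (ends e)) (snd (ends e)) \<and>
      e = {fst (ends e), snd (ends e)}" if "e \<in> graph_edges V adj" for e
  proof -
    have "\<exists>p. fst p \<in> V \<and> snd p \<in> V \<and> adj (fst p) (snd p) \<and> e = {fst p, snd p}"
      using that by (auto simp: graph_edges_def)
    from someI_ex[OF this] show ?thesis by (simp add: ends_def)
  qed
  have image_\<gamma>: "path_image (\<gamma> e) = closed_segment (f u) (f v)"
    if "e \<in> graph_edges V adj" "e = {u, v}" for e u v
    using edge_ends[OF that(1)] that(2) by (auto simp: \<gamma>_def doubleton_eq_iff closed_segment_commute)
  have edges_meet: "path_image (\<gamma> e) \<inter> path_image (\<gamma> e') \<subseteq> f ` (e \<inter> e')"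
    if e: "e \<in> graph_edges V adj" and e': "e' \<in> graph_edges V adj" and "e \<noteq> e'" for e e'
  proof -
    obtain u v u' v' where uv: "u \<in> V" "v \<in> V" "adj u v" "e = {u, v}"
      and uv': "u' \<in> V" "v' \<in> V" "adj u' v'" "e' = {u', v'}"
      using edge_ends e e' by metis
    have "path_image (\<gamma> e) \<inter> path_image (\<gamma> e') = closed_segment (f u) (f v) \<inter> closed_segment (f u') (f v')"
      using image_\<gamma>[OF e uv(4)] image_\<gamma>[OF e' uv'(4)] by simp
    also have "\<dots> \<subseteq> {f u, f v} \<inter> {f u', f v'}"
      using proper[of u v u' v'] uv uv' \<open>e \<noteq> e'\<close> by (simp add: proper_segments_def)
    also have "\<dots> = f ` (e \<inter> e')"
      using inj uv uv' by (simp add: inj_on_image_Int)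
    finally show ?thesis .
  qed
  show ?thesis
    unfolding planar_def
  proof (intro exI[of _ f] exI[of _ \<gamma>] conjI ballI impI)
    show "inj_on f V" by (rule inj)
  next
    fix e assume e: "e \<in> graph_edges V adj"
    show "\<exists>u v. e = {u, v} \<and> arc (\<gamma> e) \<and> pathstart (\<gamma> e) = f u \<and> pathfinish (\<gamma> e) = f v"
    proof (rule exI[of _ "fst (ends e)"], rule exI[of _ "snd (ends e)"], intro conjI)
      show "e = {fst (ends e), snd (ends e)}" using edge_ends[OF e] by blast
      have "fst (ends e) \<noteq> snd (ends e)" using edge_ends[OF e] irrefl by metis
      then show "arc (\<gamma> e)" using edge_ends[OF e] inj by (simp add: \<gamma>_def inj_on_eq_iff)
    qed (simp_all add: \<gamma>_def)
    show "path_image (\<gamma> e) \<inter> f ` V \<subseteq> f ` e"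
    proof
      fix x assume x: "x \<in> path_image (\<gamma> e) \<inter> f ` V"
      then obtain w w' where w: "w \<in> V" "x = f w" "w' \<in> V" "adj w w'"
        using no_isolated by blast
      then have rung: "{w, w'} \<in> graph_edges V adj" by (auto simp: graph_edges_def)
      show "x \<in> f ` e"
      proof (cases "e = {w, w'}")
        case True then show ?thesis using w by simp
      next
        case False
        have "x \<in> path_image (\<gamma> {w, w'})"
          using w image_\<gamma>[OF rung refl] by simp
        then show ?thesis using edges_meet[OF e rung False] x by blast
      qed
    qed
  next
    fix e e' assume "e \<in> graph_edges V adj" "e' \<in> graph_edges V adj" "e \<noteq> e'"
    then show "path_image (\<gamma> e) \<inter> path_image (\<gamma> e') \<subseteq> f ` (e \<inter> e')" by (rule edges_meet)
  qed
qed

section \<open>A self-similar drawing of the ladder\<close>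

definition spiral_step :: "real \<times> real \<Rightarrow> real \<times> real" where
  "spiral_step p = (- snd p / 4, fst p / 4)"

definition spiral :: "nat \<times> nat \<Rightarrow> real \<times> real" where
  "spiral v = (spiral_step ^^ fst v) (if snd v = 0 then (1, 0) else (-1, 1))"

definition shift :: "nat \<Rightarrow> nat \<times> nat \<Rightarrow> nat \<times> nat" where
  "shift k v = (k + fst v, snd v)"

lemma linear_spiral_step_funpow: "linear (spiral_step ^^ k)"
proof (induction k)
  case 0 then show ?case by (simp add: linear_id[unfolded id_def])
next
  case (Suc k)
  have "linear spiral_step" by (rule linearI) (auto simp: spiral_step_def)
  with Suc show ?case using linear_compose by (fastforce simp: o_def)
qed

lemma inj_spiral_step_funpow: "inj (spiral_step ^^ k)"
proof -
  have "inj spiral_step" by (rule injI) (auto simp: spiral_step_def prod_eq_iff)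
  then show ?thesis by simp
qed

lemma spiral_shift: "spiral (shift k v) = (spiral_step ^^ k) (spiral v)"
  by (simp add: spiral_def shift_def funpow_add)

lemma spiral_Suc: "spiral (Suc k, b) = spiral_step (spiral (k, b))"
  by (simp add: spiral_def)

lemma norm_spiral_step: "norm (spiral_step p) = norm p / 4"
  by (cases p) (simp add: spiral_step_def norm_Pair power_divide real_sqrt_divide add_divide_distrib[symmetric] add.commute)

lemma spiral_norm_sq: "norm (spiral (k, b)) ^ 2 = (if b = 0 then 1 else 2) / 16 ^ k"
proof (induction k)
  case 0 then show ?case by (simp add: spiral_def norm_Pair)
next
  case (Suc k)
  then show ?case by (simp add: spiral_Suc norm_spiral_step power_divide)
qed

lemma inj_on_spiral: "inj_on spiral (UNIV \<times> {0, 1})"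
proof (rule inj_onI, clarify)
  fix i j :: nat and b c :: nat
  assume bc: "b \<in> {0, 1}" "c \<in> {0, 1}" and eq: "spiral (i, b) = spiral (j, c)"
  have "(if b = 0 then 1 else 2) * (16::real) ^ j = (if c = 0 then 1 else 2) * 16 ^ i"
    using arg_cong[OF eq, of "\<lambda>x. norm x ^ 2"] by (simp add: spiral_norm_sq field_simps)
  moreover have "(16::real) ^ n = 2 ^ (4 * n)" for n by (simp add: power_mult)
  ultimately have "(2::real) ^ (4 * j + (if b = 0 then 0 else 1)) = 2 ^ (4 * i + (if c = 0 then 0 else 1))"
    by (simp add: power_add mult.commute split: if_splits)
  then have "4 * j + (if b = 0 then 0 else 1) = 4 * i + (if c = 0 then 0 else (1::nat))"
    by (simp only: power_inject_exp)
  then show "i = j \<and> b = c" using bc by (auto split: if_splits) presburger+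
qed

definition base_edges :: "((nat \<times> nat) \<times> (nat \<times> nat)) list" where
  "base_edges = [((0, 0), (0, 1)), ((0, 0), (1, 0)), ((0, 0), (1, 1)), ((0, 1), (1, 0)), ((0, 1), (1, 1))]"

lemma spiral_table:
  "spiral (0, 0) = (1, 0)" "spiral (0, Suc 0) = (-1, 1)"
  "spiral (Suc 0, 0) = (0, 1/4)" "spiral (Suc 0, Suc 0) = (-1/4, -1/4)"
  "spiral (Suc (Suc 0), 0) = (-1/16, 0)" "spiral (Suc (Suc 0), Suc 0) = (1/16, -1/16)"
  by (simp_all add: spiral_def spiral_step_def numeral_eq_Suc)

lemma base_edges_near:
  assumes "(a, b) \<in> set base_edges" "(a', b') \<in> set base_edges" "d \<le> 1"
    and "{a, b} \<noteq> {shift d a', shift d b'}"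
  shows "proper_segments (spiral a) (spiral b) (spiral (shift d a')) (spiral (shift d b'))"
proof (rule proper_segments_if_hinged_or_separated)
  have "d = 0 \<or> d = 1" using assms(3) by auto
  with assms(1,2,4) show "hinged_or_separated (spiral a) (spiral b) (spiral (shift d a')) (spiral (shift d b'))"
    unfolding base_edges_def
    apply (simp only: list.set insert_iff empty_iff prod.inject simp_thms)
    apply (elim disjE conjE; hypsubst)
    apply (simp_all only: shift_def fst_conv snd_conv add_0 add_0_right add_Suc One_nat_def spiral_table)
    apply (simp_all add: hinged_or_separated_def left_of_def det2_def)
    done
qed

definition spiral_triangle :: "(real \<times> real) set" where
  "spiral_triangle = convex hull {spiral (0, 0), spiral (0, 1), spiral (1, 1)}"

lemma spiral_step_spiral_triangle: "spiral_step ` spiral_triangle \<subseteq> spiral_triangle"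
proof -
  have "spiral_step ` spiral_triangle = convex hull {spiral (1, 0), spiral (1, 1), spiral (2, 1)}"
    using linear_spiral_step_funpow[of 1]
    by (simp add: spiral_triangle_def convex_hull_linear_image spiral_Suc[symmetric] numeral_2_eq_2)
  also have "\<dots> \<subseteq> spiral_triangle"
  proof (rule hull_minimal)
    have in_hull: "u *\<^sub>R spiral (0, 0) + v *\<^sub>R spiral (0, 1) + w *\<^sub>R spiral (1, 1) \<in> spiral_triangle"
      if "0 \<le> u" "0 \<le> v" "0 \<le> w" "u + v + w = 1" for u v w
      unfolding spiral_triangle_def convex_hull_3 using that by blast
    have "spiral (1, 0) = (11/28) *\<^sub>R spiral (0, 0) + (9/28) *\<^sub>R spiral (0, 1) + (2/7) *\<^sub>R spiral (1, 1)"
      "spiral (2, 1) = (17/56) *\<^sub>R spiral (0, 0) + (5/56) *\<^sub>R spiral (0, 1) + (17/28) *\<^sub>R spiral (1, 1)"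
      by (simp_all add: spiral_def spiral_step_def numeral_eq_Suc)
    moreover have "spiral (1, 1) \<in> spiral_triangle"
      unfolding spiral_triangle_def by (simp add: hull_inc)
    ultimately show "{spiral (1, 0), spiral (1, 1), spiral (2, 1)} \<subseteq> spiral_triangle"
      using in_hull[of "11/28" "9/28" "2/7"] in_hull[of "17/56" "5/56" "17/28"] by simp
  qed (simp add: spiral_triangle_def)
  finally show ?thesis .
qed

lemma spiral_in_triangle: "spiral (k, b) \<in> spiral_triangle"
proof (induction k)
  case 0
  have "spiral (0, b) \<in> {spiral (0, 0), spiral (0, 1)}" by (simp add: spiral_def)
  then show ?case unfolding spiral_triangle_def by (auto intro: hull_inc)
next
  case (Suc k)
  then show ?case using spiral_step_spiral_triangle by (auto simp: spiral_Suc)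
qed

lemma spiral_in_inner_triangle:
  assumes "2 \<le> k"
  shows "spiral (k, b) \<in> convex hull {spiral (2, 0), spiral (2, 1), spiral (3, 1)}"
proof -
  obtain j where "k = 2 + j" using assms le_iff_add by blast
  then have "spiral (k, b) = (spiral_step ^^ 2) (spiral (j, b))"
    using spiral_shift[of 2 "(j, b)"] by (simp add: shift_def)
  moreover have "(spiral_step ^^ 2) ` spiral_triangle = convex hull {spiral (2, 0), spiral (2, 1), spiral (3, 1)}"
    using spiral_shift[of 2 "(0, 0)"] spiral_shift[of 2 "(0, 1)"] spiral_shift[of 2 "(1, 1)"]
    by (simp add: spiral_triangle_def convex_hull_linear_image[OF linear_spiral_step_funpow] shift_def)
  ultimately show ?thesis using spiral_in_triangle by blast
qed

lemma base_edges_far: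
  assumes "(a, b) \<in> set base_edges" "2 \<le> fst w" "2 \<le> fst w'"
  shows "proper_segments (spiral a) (spiral b) (spiral w) (spiral w')"
proof -
  define T where "T = {spiral (2, 0), spiral (2, 1), spiral (3, 1)}"
  have "closed_segment (spiral w) (spiral w') \<subseteq> convex hull T"
    using spiral_in_inner_triangle[of "fst w" "snd w"] spiral_in_inner_triangle[of "fst w'" "snd w'"] assms(2,3)
    by (intro closed_segment_subset) (simp_all add: T_def)
  moreover have "(\<forall>x\<in>T. left_of (spiral a) (spiral b) x) \<or> (\<forall>x\<in>T. left_of (spiral b) (spiral a) x)"
    using assms(1) unfolding base_edges_def T_def
    by (auto simp: spiral_def spiral_step_def left_of_def det2_def numeral_eq_Suc)
  then have "closed_segment (spiral a) (spiral b) \<inter> convex hull T = {}"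
    using closed_segment_disjoint_hull closed_segment_commute by metis
  ultimately show ?thesis unfolding proper_segments_def by blast
qed

lemma base_edges_shifted:
  assumes "(a, b) \<in> set base_edges" "(a', b') \<in> set base_edges" "i \<le> j"
    and "{shift i a, shift i b} \<noteq> {shift j a', shift j b'}"
  shows "proper_segments (spiral (shift i a)) (spiral (shift i b)) (spiral (shift j a')) (spiral (shift j b'))"
proof -
  obtain d where "j = i + d" using assms(3) le_iff_add by blast
  then have shift_j: "shift j x = shift i (shift d x)" for x by (simp add: shift_def)
  have "{a, b} \<noteq> {shift d a', shift d b'}"
  proof
    assume "{a, b} = {shift d a', shift d b'}"
    then have "shift i ` {a, b} = shift i ` {shift d a', shift d b'}" by simp
    then show False using assms(4) by (simp add: shift_j)
  qed
  then have "proper_segments (spiral a) (spiral b) (spiral (shift d a')) (spiral (shift d b'))"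
    using assms(1,2) base_edges_near base_edges_far[of a b "shift d a'" "shift d b'"]
    by (cases "d \<le> 1") (auto simp: shift_def)
  then show ?thesis
    using proper_segments_linear_image[OF linear_spiral_step_funpow inj_spiral_step_funpow] by (simp add: spiral_shift shift_j)
qed

abbreviation ladder_adj :: "nat \<times> nat \<Rightarrow> nat \<times> nat \<Rightarrow> bool" where
  "ladder_adj \<equiv> strong_product path_adj K2_adj"

abbreviation ladder_V :: "nat \<Rightarrow> (nat \<times> nat) set" where
  "ladder_V m \<equiv> path_V m \<times> K2_V"

lemma ladder_adj_iff: "ladder_adj (i, b) (j, c) \<longleftrightarrow> (i, b) \<noteq> (j, c) \<and> i \<le> j + 1 \<and> j \<le> i + 1"
  by (auto simp: strong_product_def path_adj_def K2_adj_def)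

lemma ladder_edge_shift_of_base:
  assumes "ladder_adj u v" "snd u \<le> 1" "snd v \<le> 1"
  shows "\<exists>k a b. (a, b) \<in> set base_edges \<and> {u, v} = {shift k a, shift k b}"
proof -
  obtain i b j c where uv: "u = (i, b)" "v = (j, c)" by fastforce
  have bc: "b \<in> {0, 1}" "c \<in> {0, 1}" using assms(2,3) uv by auto
  consider "i = j" "b \<noteq> c" | "j = i + 1" | "i = j + 1"
    using assms(1) uv by (auto simp: ladder_adj_iff le_Suc_eq)
  then show ?thesis
  proof cases
    case 1
    then have "{u, v} = {shift i (0, 0), shift i (0, 1)}" using uv bc by (auto simp: shift_def)
    moreover have "((0, 0), (0, 1)) \<in> set base_edges" by (simp add: base_edges_def)
    ultimately show ?thesis by blast
  next
    case 2
    then have "{u, v} = {shift i (0, b), shift i (1, c)}" using uv by (simp add: shift_def)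
    moreover have "((0, b), (1, c)) \<in> set base_edges" using bc by (auto simp: base_edges_def)
    ultimately show ?thesis by blast
  next
    case 3
    then have "{u, v} = {shift j (0, c), shift j (1, b)}" using uv by (auto simp: shift_def)
    moreover have "((0, c), (1, b)) \<in> set base_edges" using bc by (auto simp: base_edges_def)
    ultimately show ?thesis by blast
  qed
qed

lemma ladder_spiral_proper:
  assumes "ladder_adj u v" "ladder_adj u' v'" "snd u \<le> 1" "snd v \<le> 1" "snd u' \<le> 1" "snd v' \<le> 1"
    and "{u, v} \<noteq> {u', v'}"
  shows "proper_segments (spiral u) (spiral v) (spiral u') (spiral v')"
proof -
  obtain i a b where base: "(a, b) \<in> set base_edges" and uv: "{u, v} = {shift i a, shift i b}"
    using ladder_edge_shift_of_base[OF assms(1,3,4)] by blast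
  obtain j a' b' where base': "(a', b') \<in> set base_edges" and uv': "{u', v'} = {shift j a', shift j b'}"
    using ladder_edge_shift_of_base[OF assms(2,5,6)] by blast
  have "proper_segments (spiral (shift i a)) (spiral (shift i b)) (spiral (shift j a')) (spiral (shift j b'))"
  proof (cases "i \<le> j")
    case True
    then show ?thesis using base_edges_shifted[OF base base' True] uv uv' assms(7) by simp
  next
    case False
    then have "j \<le> i" by simp
    with base_edges_shifted[OF base' base this] uv uv' assms(7) show ?thesis
      using proper_segments_commute(3) by auto
  qed
  moreover have "{spiral u, spiral v} = {spiral (shift i a), spiral (shift i b)}"
    "{spiral u', spiral v'} = {spiral (shift j a'), spiral (shift j b')}"
    using arg_cong[OF uv, of "image spiral"] arg_cong[OF uv', of "image spiral"] by simp_all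
  ultimately show ?thesis using proper_segments_doubleton_cong by metis
qed

lemma planar_ladder: "planar (ladder_V m) ladder_adj"
proof (rule planar_straight_line)
  show "inj_on spiral (ladder_V m)"
    using inj_on_spiral by (rule inj_on_subset) (auto simp: K2_V_def)
next
  fix v assume "v \<in> ladder_V m"
  then obtain i b where v: "v = (i, b)" "i < m" "b \<in> {0, 1}" by (auto simp: path_V_def K2_V_def)
  show "\<not> ladder_adj v v" by (simp add: v(1) ladder_adj_iff)
  have "(i, 1 - b) \<in> ladder_V m" "ladder_adj v (i, 1 - b)"
    using v by (auto simp: path_V_def K2_V_def ladder_adj_iff)
  then show "\<exists>w\<in>ladder_V m. ladder_adj v w" by blast
next
  fix u v u' v' assume "u \<in> ladder_V m" "v \<in> ladder_V m" "u' \<in> ladder_V m" "v' \<in> ladder_V m"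
    and "ladder_adj u v" "ladder_adj u' v'" "{u, v} \<noteq> {u', v'}"
  then show "proper_segments (spiral u) (spiral v) (spiral u') (spiral v')"
    by (intro ladder_spiral_proper) (auto simp: K2_V_def)
qed

section \<open>Closed neighbourhoods\<close>

lemma closed_nbhd_ladder:
  assumes "(i, b) \<in> ladder_V m"
  shows "closed_nbhd (ladder_V m) ladder_adj (i, b) = {k. k < m \<and> i \<le> k + 1 \<and> k \<le> i + 1} \<times> {0, 1}"
  using assms by (auto simp: closed_nbhd_def path_V_def K2_V_def ladder_adj_iff)

lemma card_ladder_neighbours:
  assumes "finite L" "j \<in> L" "c \<in> {0, 1}"
  shows "card {y \<in> L \<times> {0, 1}. ladder_adj (j, c) y} = 2 * card {k \<in> L. j \<le> k + 1 \<and> k \<le> j + 1} - 1"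
proof -
  have "{y \<in> L \<times> {0, 1}. ladder_adj (j, c) y} = {k \<in> L. j \<le> k + 1 \<and> k \<le> j + 1} \<times> {0, 1} - {(j, c)}"
    by (auto simp: ladder_adj_iff)
  moreover have "(j, c) \<in> {k \<in> L. j \<le> k + 1 \<and> k \<le> j + 1} \<times> {0, 1}" using assms(2,3) by simp
  ultimately show ?thesis using assms(1) by (simp add: card_cartesian_product mult.commute)
qed

lemma closed_locally_dirac_ladder: "closed_locally_dirac (ladder_V m) ladder_adj"
  unfolding closed_locally_dirac_def dirac_induced_def
proof (intro ballI)
  fix v x assume v: "v \<in> ladder_V m" and x: "x \<in> closed_nbhd (ladder_V m) ladder_adj v"
  obtain i b j c where ij: "v = (i, b)" "x = (j, c)" by fastforce
  define L where "L = {k. k < m \<and> i \<le> k + 1 \<and> k \<le> i + 1}"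
  define L' where "L' = {k \<in> L. j \<le> k + 1 \<and> k \<le> j + 1}"
  have S: "closed_nbhd (ladder_V m) ladder_adj v = L \<times> {0, 1}"
    using closed_nbhd_ladder v ij(1) L_def by simp
  have fin: "finite L" by (simp add: L_def)
  have jc: "j \<in> L" "c \<in> {0, 1}" using x S ij(2) by auto
  have "card L \<le> 2 * card L' - 1"
  proof (cases "j = i")
    case True
    then have "L' = L" by (auto simp: L'_def L_def)
    then show ?thesis using fin jc(1) card_gt_0_iff[of L] by auto
  next
    case False
    have "i < m" using v ij(1) by (simp add: path_V_def)
    with jc(1) have "{i, j} \<subseteq> L'" by (auto simp: L'_def L_def)
    then have "2 \<le> card L'" using False fin card_mono[of L' "{i, j}"] by (simp add: L'_def)
    moreover have "card L \<le> card {i - 1, i, i + 1}" using fin by (intro card_mono) (auto simp: L_def)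
    moreover have "card {i - 1, i, i + (1::nat)} \<le> 3" by (simp add: card_insert_if)
    ultimately show ?thesis by linarith
  qed
  moreover have "card {y \<in> L \<times> {0, 1}. ladder_adj x y} = 2 * card L' - 1"
    using card_ladder_neighbours[OF fin jc] ij(2) by (simp add: L'_def)
  ultimately show "real (card (closed_nbhd (ladder_V m) ladder_adj v)) / 2 \<le>
      real (card {y \<in> closed_nbhd (ladder_V m) ladder_adj v. ladder_adj x y})"
    using fin by (simp add: S card_cartesian_product)
qed

\<comment> \<open>Both properties hold for every m.\<close>
theorem mainTheorem7:
  fixes m :: nat
  assumes "m \<ge> 3"
  shows "planar (path_V m \<times> K2_V) (strong_product path_adj K2_adj) \<and>
         closed_locally_dirac (path_V m \<times> K2_V) (strong_product path_adj K2_adj)"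
  using planar_ladder closed_locally_dirac_ladder by blast

end
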